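(* Let $H$ be a finite simple graph and let $G$ be a graph obtained from $H$ by proliferating some of its leaves. If $I(H)^{[k]}$ has linear quotients, then $I(G)^{[k]}$ has linear quotients.
   Context: Graph vertices are identified with variables of a polynomial ring over a field $K$, edges with degree-2 monomials. $I(H)^{[k]}$ is the ideal generated by all products $e_1\cdots e_k$ over $k$-matchings of $H$. Proliferating a leaf: if $a$ is a leaf (vertex of degree 1) of a graph with unique neighbour $b$, one adds new vertices $a_1,\ldots,a_t$ and new edges $\{a_1,b\},\ldots,\{a_t,b\}$ (so the $a_i$ are leaves); "proliferating some leaves" means applying this operation to some leaves. A monomial ideal has linear quotients if its minimal generators can be ordered $u_1,\ldots,u_m$ so that $(u_1,\ldots,u_{j-1}):u_j$ is generated by variables for each $j=2,\ldots,m$. *)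

theory Defs
  imports "HOL-Library.Multiset"
begin

(* Monomials in the variables of type 'a are finite multisets of variables:
   product = (+), divisibility = (\<subseteq>#), the variable x is {#x#}.
   A monomial ideal of K[x] is determined by the set of monomials it contains. *)

type_synonym 'a monomial = "'a multiset"

definition mon_ideal :: "'a monomial set \<Rightarrow> 'a monomial set" where
  "mon_ideal S = {m. \<exists>s\<in>S. s \<subseteq># m}"

definition colon :: "'a monomial set \<Rightarrow> 'a monomial \<Rightarrow> 'a monomial set" where
  "colon I u = {m. m + u \<in> I}"

definition generated_by_variables :: "'a monomial set \<Rightarrow> bool" where
  "generated_by_variables I \<longleftrightarrow> (\<exists>X. I = mon_ideal ((\<lambda>x. {#x#}) ` X))"

definition min_gens :: "'a monomial set \<Rightarrow> 'a monomial set" where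
  "min_gens S = {g\<in>S. \<forall>h\<in>S. h \<subseteq># g \<longrightarrow> h = g}"

definition has_linear_quotients :: "'a monomial set \<Rightarrow> bool" where
  "has_linear_quotients S \<longleftrightarrow>
     (\<exists>us. distinct us \<and> set us = min_gens S \<and>
        (\<forall>j. 1 \<le> j \<and> j < length us \<longrightarrow>
            generated_by_variables (colon (mon_ideal (set (take j us))) (us ! j))))"

definition finite_simple_graph :: "'a set \<Rightarrow> 'a set set \<Rightarrow> bool" where
  "finite_simple_graph V E \<longleftrightarrow> finite V \<and> (\<forall>e\<in>E. e \<subseteq> V \<and> card e = 2)"

definition matching :: "'a set set \<Rightarrow> 'a set set \<Rightarrow> nat \<Rightarrow> bool" where
  "matching E M k \<longleftrightarrow> M \<subseteq> E \<and> card M = k \<and>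
     (\<forall>e\<in>M. \<forall>f\<in>M. e \<noteq> f \<longrightarrow> e \<inter> f = {})"

definition matching_monomial :: "'a set set \<Rightarrow> 'a monomial" where
  "matching_monomial M = (\<Sum>e\<in>M. mset_set e)"

definition matching_gens :: "'a set set \<Rightarrow> nat \<Rightarrow> 'a monomial set" where
  "matching_gens E k = matching_monomial ` {M. matching E M k}"

definition is_leaf :: "'a set \<Rightarrow> 'a set set \<Rightarrow> 'a \<Rightarrow> bool" where
  "is_leaf V E a \<longleftrightarrow> a \<in> V \<and> card {e\<in>E. a \<in> e} = 1"

definition proliferate_step :: "'a set \<times> 'a set set \<Rightarrow> 'a set \<times> 'a set set \<Rightarrow> bool" where
  "proliferate_step H G \<longleftrightarrow>
     (\<exists>a b N. is_leaf (fst H) (snd H) a \<and> {a, b} \<in> snd H \<and> finite N \<and> N \<inter> fst H = {} \<and>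
        G = (fst H \<union> N, snd H \<union> {{x, b} | x. x \<in> N}))"

definition obtained_by_proliferating :: "'a set \<times> 'a set set \<Rightarrow> 'a set \<times> 'a set set \<Rightarrow> bool" where
  "obtained_by_proliferating H G \<longleftrightarrow> proliferate_step\<^sup>*\<^sup>* H G"

end

theory Submission
  imports Defs
begin

(* Adding one new leaf c at the neighbour b of a leaf a changes the generators of I^[k] only by
   adding u c / a for every generator u divisible by a: a k-matching through the new edge {c, b}
   is a k-matching through {a, b} with that edge exchanged.  All generators have degree 2k, are
   squarefree in a and free of c.  Inserting each u c / a directly after u in a linear quotient
   order of the old generators gives a linear quotient order of the new ones: colon witnesses
   survive the substitution a -> c (a witness a turns into the witness c), and u itself provides
   the witness a for u c / a.  Proliferating leaves iterates this step. *)

definition linear_quotient :: "'a monomial set \<Rightarrow> 'a monomial \<Rightarrow> bool" where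
  "linear_quotient P u \<longleftrightarrow> (\<forall>w\<in>P. \<exists>x. x \<in># w - u \<and> add_mset x u \<in> mon_ideal P)"

lemma mon_idealI: "s \<in> P \<Longrightarrow> s \<subseteq># m \<Longrightarrow> m \<in> mon_ideal P"
  unfolding mon_ideal_def by blast

lemma mon_ideal_upward_closed: "m \<in> mon_ideal P \<Longrightarrow> m \<subseteq># m' \<Longrightarrow> m' \<in> mon_ideal P"
  unfolding mon_ideal_def by (blast intro: subset_mset.order_trans)

lemma mon_ideal_mono: "A \<subseteq> B \<Longrightarrow> mon_ideal A \<subseteq> mon_ideal B"
  unfolding mon_ideal_def by blast

lemma mem_mon_ideal_variables: "m \<in> mon_ideal ((\<lambda>x. {#x#}) ` X) \<longleftrightarrow> (\<exists>x\<in>X. x \<in># m)"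
  unfolding mon_ideal_def by auto

lemma mem_colon_mon_ideal: "m \<in> colon (mon_ideal P) u \<longleftrightarrow> (\<exists>s\<in>P. s \<subseteq># m + u)"
  unfolding colon_def mon_ideal_def by simp

lemma generated_by_variables_colon_iff:
  "generated_by_variables (colon (mon_ideal P) u) \<longleftrightarrow> linear_quotient P u"
proof
  assume "generated_by_variables (colon (mon_ideal P) u)"
  then obtain X where X: "colon (mon_ideal P) u = mon_ideal ((\<lambda>x. {#x#}) ` X)"
    unfolding generated_by_variables_def by blast
  show "linear_quotient P u"
    unfolding linear_quotient_def
  proof
    fix w assume "w \<in> P"
    then have "w - u \<in> colon (mon_ideal P) u"
      by (auto simp: mem_colon_mon_ideal subset_eq_diff_conv[symmetric])
    then obtain x where "x \<in> X" "x \<in># w - u"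
      by (auto simp: X mem_mon_ideal_variables)
    moreover have "{#x#} \<in> colon (mon_ideal P) u" if "x \<in> X"
      using that by (simp add: X mem_mon_ideal_variables)
    ultimately show "\<exists>x. x \<in># w - u \<and> add_mset x u \<in> mon_ideal P"
      by (auto simp: colon_def)
  qed
next
  assume lq: "linear_quotient P u"
  have "colon (mon_ideal P) u = mon_ideal ((\<lambda>x. {#x#}) ` {x. add_mset x u \<in> mon_ideal P})"
  proof (rule set_eqI)
    fix m
    have "(\<exists>x. x \<in># m \<and> add_mset x u \<in> mon_ideal P)" if "m \<in> colon (mon_ideal P) u"
    proof -
      from that obtain s where "s \<in> P" "s \<subseteq># m + u"
        by (auto simp: mem_colon_mon_ideal)
      moreover from lq \<open>s \<in> P\<close> obtain x where "x \<in># s - u" "add_mset x u \<in> mon_ideal P"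
        unfolding linear_quotient_def by blast
      ultimately show ?thesis
        by (meson mset_subset_eqD subset_eq_diff_conv)
    qed
    moreover have "m \<in> colon (mon_ideal P) u" if "x \<in># m" "add_mset x u \<in> mon_ideal P" for x
      using that by (auto simp: colon_def intro: mon_ideal_upward_closed)
    ultimately show "m \<in> colon (mon_ideal P) u \<longleftrightarrow>
        m \<in> mon_ideal ((\<lambda>x. {#x#}) ` {x. add_mset x u \<in> mon_ideal P})"
      by (auto simp: mem_mon_ideal_variables)
  qed
  then show "generated_by_variables (colon (mon_ideal P) u)"
    unfolding generated_by_variables_def by blast
qed

definition linear_quotient_order :: "'a monomial list \<Rightarrow> bool" where
  "linear_quotient_order us \<longleftrightarrow> (\<forall>j<length us. linear_quotient (set (take j us)) (us ! j))"

lemma linear_quotient_order_Nil: "linear_quotient_order []"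
  by (simp add: linear_quotient_order_def)

lemma linear_quotient_order_snoc:
  "linear_quotient_order (us @ [u]) \<longleftrightarrow> linear_quotient_order us \<and> linear_quotient (set us) u"
  unfolding linear_quotient_order_def by (auto simp: nth_append less_Suc_eq)

lemma has_linear_quotients_iff:
  "has_linear_quotients S \<longleftrightarrow> (\<exists>us. distinct us \<and> set us = min_gens S \<and> linear_quotient_order us)"
proof -
  have "linear_quotient (set (take 0 us)) u" for us u
    by (simp add: linear_quotient_def)
  then have "(\<forall>j. 1 \<le> j \<and> j < length us \<longrightarrow> linear_quotient (set (take j us)) (us ! j))
      \<longleftrightarrow> linear_quotient_order us" for us :: "'a monomial list"
    unfolding linear_quotient_order_def by (metis less_one linorder_not_le)
  then show ?thesis
    unfolding has_linear_quotients_def generated_by_variables_colon_iff by presburger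
qed

lemma min_gens_same_size: "\<forall>u\<in>S. size u = n \<Longrightarrow> min_gens S = S"
  unfolding min_gens_def by (auto dest: mset_subset_size simp: subset_mset.le_less)

(* u c / a, meant for a \<in># u; otherwise it is u c *)
definition replace_var :: "'a \<Rightarrow> 'a \<Rightarrow> 'a monomial \<Rightarrow> 'a monomial" where
  "replace_var a c u = add_mset c (u - {#a#})"

definition with_replaced :: "'a \<Rightarrow> 'a \<Rightarrow> 'a monomial set \<Rightarrow> 'a monomial set" where
  "with_replaced a c Y = Y \<union> replace_var a c ` {u\<in>Y. a \<in># u}"

lemma mem_replace_var_self [simp]: "c \<in># replace_var a c u"
  by (simp add: replace_var_def)

lemma count_replace_var_other:
  "x \<noteq> a \<Longrightarrow> x \<noteq> c \<Longrightarrow> count (replace_var a c u) x = count u x"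
  by (simp add: replace_var_def)

lemma replace_var_add_mset_self [simp]: "replace_var a c (add_mset a u) = add_mset c u"
  by (simp add: replace_var_def)

lemma replace_var_add_mset:
  "a \<in># u \<Longrightarrow> replace_var a c (add_mset x u) = add_mset x (replace_var a c u)"
  by (simp add: replace_var_def)

lemma size_replace_var: "a \<in># u \<Longrightarrow> size (replace_var a c u) = size u"
  by (simp add: replace_var_def size_Suc_Diff1)

lemma replace_var_inj: "a \<in># u \<Longrightarrow> a \<in># v \<Longrightarrow> replace_var a c u = replace_var a c v \<Longrightarrow> u = v"
  unfolding replace_var_def by (metis add_mset_remove_trivial insert_DiffM)

lemma replace_var_mono: "s \<subseteq># m \<Longrightarrow> replace_var a c s \<subseteq># replace_var a c m"
  unfolding replace_var_def subseteq_mset_def by (simp add: diff_le_mono)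

lemma subset_replace_var: "a \<notin># s \<Longrightarrow> s \<subseteq># m \<Longrightarrow> s \<subseteq># replace_var a c m"
  unfolding replace_var_def subseteq_mset_def by (auto simp: not_in_iff le_SucI)

lemma mon_ideal_subset_with_replaced: "mon_ideal Y \<subseteq> mon_ideal (with_replaced a c Y)"
  unfolding with_replaced_def by (rule mon_ideal_mono) blast

lemma replace_var_mem_mon_ideal:
  assumes "m \<in> mon_ideal Y"
  shows "replace_var a c m \<in> mon_ideal (with_replaced a c Y)"
proof -
  from assms obtain s where s: "s \<in> Y" "s \<subseteq># m"
    unfolding mon_ideal_def by blast
  show ?thesis
  proof (cases "a \<in># s")
    case True
    then have "replace_var a c s \<in> with_replaced a c Y"
      using s(1) by (auto simp: with_replaced_def)
    then show ?thesis
      using replace_var_mono[OF s(2)] by (rule mon_idealI)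
  next
    case False
    then show ?thesis
      using s by (auto simp: with_replaced_def intro: mon_idealI subset_replace_var)
  qed
qed

lemma linear_quotient_with_replaced:
  assumes lq: "linear_quotient Y u" and cu: "c \<notin># u" and cY: "\<forall>v\<in>Y. c \<notin># v"
  shows "linear_quotient (with_replaced a c Y) u"
  unfolding linear_quotient_def
proof
  fix w assume "w \<in> with_replaced a c Y"
  then consider "w \<in> Y" | v where "v \<in> Y" "w = replace_var a c v"
    unfolding with_replaced_def by blast
  then show "\<exists>x. x \<in># w - u \<and> add_mset x u \<in> mon_ideal (with_replaced a c Y)"
  proof cases
    case 1
    then show ?thesis
      using lq mon_ideal_subset_with_replaced[of Y a c] unfolding linear_quotient_def by blast
  next
    case 2
    from lq \<open>v \<in> Y\<close> obtain x where x: "x \<in># v - u" "add_mset x u \<in> mon_ideal Y"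
      unfolding linear_quotient_def by blast
    show ?thesis
    proof (cases "x = a")
      case True
      \<comment> \<open>the witness a against v turns into the witness c against its replacement\<close>
      have "c \<in># w - u"
        using cu 2(2) by (simp add: replace_var_def in_diff_count not_in_iff)
      moreover have "add_mset c u \<in> mon_ideal (with_replaced a c Y)"
        using replace_var_mem_mon_ideal[OF x(2), of a c] True by simp
      ultimately show ?thesis by blast
    next
      case False
      have "x \<noteq> c"
        using x(1) cY 2(1) by (meson in_diffD)
      then have "x \<in># w - u"
        using x(1) False 2(2) by (simp add: in_diff_count count_replace_var_other)
      then show ?thesis
        using x(2) mon_ideal_subset_with_replaced[of Y a c] by blast
    qed
  qed
qed

lemma linear_quotient_replace_var:
  assumes lq: "linear_quotient Y u" and au: "a \<in># u" and ac: "a \<noteq> c"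
    and cY: "\<forall>v\<in>Y. c \<notin># v" and aY: "\<forall>v\<in>Y. count v a \<le> 1"
  shows "linear_quotient (insert u (with_replaced a c Y)) (replace_var a c u)"
  unfolding linear_quotient_def
proof
  let ?Q = "insert u (with_replaced a c Y)"
  let ?u' = "replace_var a c u"
  have replaced_mem: "add_mset x ?u' \<in> mon_ideal ?Q" if "add_mset x u \<in> mon_ideal Y" for x
    using replace_var_mem_mon_ideal[OF that, of a c] mon_ideal_mono[OF subset_insertI] au
    by (auto simp: replace_var_add_mset)
  fix w assume "w \<in> ?Q"
  then consider "w = u" | v where "v \<in> Y" "w = v \<or> w = replace_var a c v"
    unfolding with_replaced_def by blast
  then show "\<exists>x. x \<in># w - ?u' \<and> add_mset x ?u' \<in> mon_ideal ?Q"
  proof cases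
    case 1
    have "a \<in># w - ?u'"
      using 1 au ac by (simp add: replace_var_def in_diff_count)
    moreover have "u \<subseteq># add_mset a ?u'"
      using au by (auto simp: subseteq_mset_def replace_var_def)
    then have "add_mset a ?u' \<in> mon_ideal ?Q"
      by (auto intro: mon_idealI)
    ultimately show ?thesis by blast
  next
    case 2
    from lq \<open>v \<in> Y\<close> obtain x where x: "x \<in># v - u" "add_mset x u \<in> mon_ideal Y"
      unfolding linear_quotient_def by blast
    have "x \<noteq> a"
    proof
      assume "x = a"
      then have "count u a < count v a"
        using x(1) by (simp add: in_diff_count)
      moreover have "count u a \<ge> 1" "count v a \<le> 1"
        using au aY 2(1) by (auto simp: Suc_le_eq)
      ultimately show False by linarith
    qed
    moreover have "x \<noteq> c"
      using x(1) cY 2(1) by (meson in_diffD)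
    ultimately have "x \<in># w - ?u'"
      using x(1) 2(2) by (auto simp: in_diff_count count_replace_var_other)
    then show ?thesis
      using replaced_mem[OF x(2)] by blast
  qed
qed

definition interleave_replaced :: "'a \<Rightarrow> 'a \<Rightarrow> 'a monomial list \<Rightarrow> 'a monomial list" where
  "interleave_replaced a c us =
     concat (map (\<lambda>u. if a \<in># u then [u, replace_var a c u] else [u]) us)"

lemma interleave_replaced_snoc:
  "interleave_replaced a c (us @ [u]) =
     (if a \<in># u then (interleave_replaced a c us @ [u]) @ [replace_var a c u]
      else interleave_replaced a c us @ [u])"
  by (simp add: interleave_replaced_def)

lemma set_interleave_replaced: "set (interleave_replaced a c us) = with_replaced a c (set us)"
  by (induction us) (auto simp: interleave_replaced_def with_replaced_def)

lemma distinct_interleave_replaced: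
  assumes "distinct us" and "\<forall>u\<in>set us. c \<notin># u"
  shows "distinct (interleave_replaced a c us)"
  using assms
proof (induction us)
  case Nil
  then show ?case by (simp add: interleave_replaced_def)
next
  case (Cons u us)
  have "distinct (interleave_replaced a c us)"
    using Cons by simp
  moreover have "u \<notin> with_replaced a c (set us)"
    using Cons.prems by (auto simp: with_replaced_def)
  moreover have "replace_var a c u \<notin> with_replaced a c (set us)" if "a \<in># u"
    using Cons.prems that replace_var_inj[of a u] by (auto simp: with_replaced_def)
  moreover have "replace_var a c u \<noteq> u"
    using Cons.prems(2) mem_replace_var_self by (metis list.set_intros(1))
  ultimately show ?case
    using set_interleave_replaced[of a c us] by (auto simp: interleave_replaced_def)
qed

lemma linear_quotient_order_interleave_replaced:
  assumes "linear_quotient_order us" and "a \<noteq> c"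
    and "\<forall>u\<in>set us. c \<notin># u" and "\<forall>u\<in>set us. count u a \<le> 1"
  shows "linear_quotient_order (interleave_replaced a c us)"
  using assms
proof (induction us rule: rev_induct)
  case Nil
  then show ?case by (simp add: interleave_replaced_def linear_quotient_order_Nil)
next
  case (snoc u us)
  then have IH: "linear_quotient_order (interleave_replaced a c us)"
    and lq: "linear_quotient (set us) u"
    by (simp_all add: linear_quotient_order_snoc)
  have lq_u: "linear_quotient (set (interleave_replaced a c us)) u"
    using linear_quotient_with_replaced[OF lq] snoc.prems by (simp add: set_interleave_replaced)
  have lq_replaced: "linear_quotient (set (interleave_replaced a c us @ [u])) (replace_var a c u)"
    if "a \<in># u"
    using linear_quotient_replace_var[OF lq that \<open>a \<noteq> c\<close>] snoc.prems
    by (simp add: set_interleave_replaced)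
  show ?case
    unfolding interleave_replaced_snoc
    using IH lq_u lq_replaced by (simp only: if_split linear_quotient_order_snoc) simp
qed

lemma has_linear_quotients_with_replaced:
  assumes "has_linear_quotients S" and "a \<noteq> c"
    and "\<forall>u\<in>S. c \<notin># u" and "\<forall>u\<in>S. count u a \<le> 1" and "\<forall>u\<in>S. size u = n"
  shows "has_linear_quotients (with_replaced a c S)"
proof -
  from assms(1) obtain us where us: "distinct us" "set us = S" "linear_quotient_order us"
    unfolding has_linear_quotients_iff min_gens_same_size[OF assms(5)] by blast
  have "min_gens (with_replaced a c S) = with_replaced a c S"
    using assms(5) by (intro min_gens_same_size) (auto simp: with_replaced_def size_replace_var)
  moreover have "distinct (interleave_replaced a c us)"
    "linear_quotient_order (interleave_replaced a c us)"
    using us assms(2-4)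
    by (auto intro: distinct_interleave_replaced linear_quotient_order_interleave_replaced)
  ultimately show ?thesis
    unfolding has_linear_quotients_iff using us(2) set_interleave_replaced by metis
qed

lemma finite_simple_graph_finite_edges: "finite_simple_graph V E \<Longrightarrow> finite E"
  unfolding finite_simple_graph_def by (meson Pow_iff finite_Pow_iff finite_subset subsetI)

lemma finite_simple_graph_edge:
  "finite_simple_graph V E \<Longrightarrow> e \<in> E \<Longrightarrow> finite e \<and> card e = 2 \<and> e \<subseteq> V"
  unfolding finite_simple_graph_def by (metis card.infinite zero_neq_numeral)

lemma finite_matching: "finite E \<Longrightarrow> matching E M k \<Longrightarrow> finite M"
  unfolding matching_def by (blast intro: finite_subset)

lemma matching_monomial_insert:
  "finite M \<Longrightarrow> e \<notin> M \<Longrightarrow> matching_monomial (insert e M) = mset_set e + matching_monomial M"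
  unfolding matching_monomial_def by simp

lemma matching_monomial_insert_edge:
  "finite M \<Longrightarrow> {x, y} \<notin> M \<Longrightarrow> x \<noteq> y \<Longrightarrow>
    matching_monomial (insert {x, y} M) = add_mset x (add_mset y (matching_monomial M))"
  by (simp add: matching_monomial_insert)

lemma mem_matching_monomial:
  "finite M \<Longrightarrow> \<forall>e\<in>M. finite e \<Longrightarrow> x \<in># matching_monomial M \<longleftrightarrow> (\<exists>e\<in>M. x \<in> e)"
  unfolding matching_monomial_def by (simp add: set_mset_sum)

lemma size_matching_monomial:
  "finite M \<Longrightarrow> \<forall>e\<in>M. finite e \<Longrightarrow> size (matching_monomial M) = (\<Sum>e\<in>M. card e)"
  by (induction M rule: finite_induct) (auto simp: matching_monomial_insert matching_monomial_def)

lemma count_matching_monomial_le_1: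
  assumes "finite M" and "\<forall>e\<in>M. finite e" and "\<forall>e\<in>M. \<forall>f\<in>M. e \<noteq> f \<longrightarrow> e \<inter> f = {}"
  shows "count (matching_monomial M) x \<le> 1"
proof (cases "\<exists>e\<in>M. x \<in> e")
  case True
  then obtain e where e: "e \<in> M" "x \<in> e" by blast
  have "x \<notin># matching_monomial (M - {e})"
    using assms e by (subst mem_matching_monomial) auto
  moreover have "matching_monomial M = mset_set e + matching_monomial (M - {e})"
    using assms(1) e(1) matching_monomial_insert[of "M - {e}" e] by (simp add: insert_absorb)
  ultimately show ?thesis
    using assms(2) e by (simp add: not_in_iff)
next
  case False
  then have "x \<notin># matching_monomial M"
    using assms by (subst mem_matching_monomial) auto
  then show ?thesis by (simp add: not_in_iff)
qed

lemma matching_gens_in_graph: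
  assumes "finite_simple_graph V E" and "u \<in> matching_gens E k"
  shows "size u = 2 * k" and "count u x \<le> 1" and "c \<notin> V \<Longrightarrow> c \<notin># u"
proof -
  obtain M where M: "matching E M k" "u = matching_monomial M"
    using assms(2) unfolding matching_gens_def by blast
  have fin: "finite M"
    using finite_matching[OF finite_simple_graph_finite_edges[OF assms(1)] M(1)] .
  have edges: "finite e \<and> card e = 2 \<and> e \<subseteq> V" if "e \<in> M" for e
    using finite_simple_graph_edge[OF assms(1)] M(1) that unfolding matching_def by blast
  have "size u = (\<Sum>e\<in>M. card e)"
    using M(2) fin edges by (simp add: size_matching_monomial)
  also have "\<dots> = (\<Sum>e\<in>M. 2)"
    using edges by (intro sum.cong) auto
  finally show "size u = 2 * k"
    using M(1) by (simp add: matching_def)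
  show "count u x \<le> 1"
    using M fin edges count_matching_monomial_le_1[of M x] by (simp add: matching_def)
  show "c \<notin># u" if "c \<notin> V"
  proof -
    have "\<forall>e\<in>M. finite e \<and> c \<notin> e"
      using edges that by blast
    then show ?thesis
      using M(2) fin mem_matching_monomial[of M c] by auto
  qed
qed

lemma leaf_edge_unique:
  assumes "is_leaf V E a" and "{a, b} \<in> E" and "e \<in> E" and "a \<in> e"
  shows "e = {a, b}"
proof -
  obtain f where f: "{e \<in> E. a \<in> e} = {f}"
    using assms(1) unfolding is_leaf_def by (meson card_1_singletonE)
  have "{a, b} \<in> {e \<in> E. a \<in> e}" and "e \<in> {e \<in> E. a \<in> e}"
    using assms(2-4) by simp_all
  then show ?thesis
    unfolding f by simp
qed

lemma matching_exchange_edge: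
  assumes M: "matching E M k" and "finite M" and "e \<in> M" and "f \<in> F" and "M - {e} \<subseteq> F"
    and disj: "\<forall>g\<in>M - {e}. g \<inter> f = {}" and "f \<noteq> {}"
  shows "matching F (insert f (M - {e})) k"
  unfolding matching_def
proof (intro conjI)
  show "insert f (M - {e}) \<subseteq> F"
    using assms(4,5) by blast
  have "f \<notin> M - {e}"
  proof
    assume "f \<in> M - {e}"
    then have "f \<inter> f = {}"
      by (rule bspec[OF disj])
    with \<open>f \<noteq> {}\<close> show False by simp
  qed
  then have "card (insert f (M - {e})) = card M"
    using card.remove[OF \<open>finite M\<close> \<open>e \<in> M\<close>] \<open>finite M\<close> by simp
  then show "card (insert f (M - {e})) = k"
    using M by (simp add: matching_def)
  show "\<forall>g\<in>insert f (M - {e}). \<forall>h\<in>insert f (M - {e}). g \<noteq> h \<longrightarrow> g \<inter> h = {}"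
    using M disj unfolding matching_def by (metis DiffD1 Int_commute insert_iff)
qed

lemma replace_var_matching_monomial_exchange:
  assumes "finite M" and "{a, b} \<notin> M" and "{c, b} \<notin> M" and "a \<noteq> b" and "c \<noteq> b"
  shows "replace_var a c (matching_monomial (insert {a, b} M)) = matching_monomial (insert {c, b} M)"
  using assms by (simp add: matching_monomial_insert_edge)

context
  fixes V :: "'a set" and E :: "'a set set" and a b c :: 'a
  assumes graph: "finite_simple_graph V E" and leaf: "is_leaf V E a" and ab: "{a, b} \<in> E"
    and fresh: "c \<notin> V"
begin

lemma twin_leaf_vertices_distinct: "a \<noteq> b" "c \<noteq> a" "c \<noteq> b"
proof -
  have "card {a, b} = 2" "{a, b} \<subseteq> V"
    using finite_simple_graph_edge[OF graph ab] by auto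
  then show "a \<noteq> b" "c \<noteq> a" "c \<noteq> b"
    using fresh by auto
qed

lemma fresh_notin_edge: "g \<in> E \<Longrightarrow> c \<notin> g"
  using finite_simple_graph_edge[OF graph] fresh by blast

lemma matching_gens_add_twin_leaf_subset:
  "matching_gens (insert {c, b} E) k \<subseteq> with_replaced a c (matching_gens E k)"
proof
  fix u assume "u \<in> matching_gens (insert {c, b} E) k"
  then obtain M where M: "matching (insert {c, b} E) M k" "u = matching_monomial M"
    unfolding matching_gens_def by blast
  have "finite M"
    using finite_matching[OF _ M(1)] finite_simple_graph_finite_edges[OF graph] by simp
  show "u \<in> with_replaced a c (matching_gens E k)"
  proof (cases "{c, b} \<in> M")
    case False
    then have "matching E M k"
      using M(1) unfolding matching_def by blast
    then show ?thesis
      using M(2) unfolding with_replaced_def matching_gens_def by blast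
  next
    case True
    let ?M0 = "M - {{c, b}}"
    have "M \<subseteq> insert {c, b} E" and disjM: "\<forall>e\<in>M. \<forall>f\<in>M. e \<noteq> f \<longrightarrow> e \<inter> f = {}"
      using M(1) unfolding matching_def by simp_all
    then have M0: "?M0 \<subseteq> E" "\<forall>g\<in>?M0. g \<inter> {c, b} = {}"
      using True by auto
    have a_notin: "a \<notin> g" if "g \<in> ?M0" for g
    proof
      assume "a \<in> g"
      have "g \<in> E"
        using M0(1) that by blast
      then have "g = {a, b}"
        using \<open>a \<in> g\<close> by (rule leaf_edge_unique[OF leaf ab])
      then show False
        using bspec[OF M0(2) that] by simp
    qed
    then have "\<forall>g\<in>?M0. g \<inter> {a, b} = {}"
      using M0(2) by auto
    then have "matching E (insert {a, b} ?M0) k"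
      by (rule matching_exchange_edge[OF M(1) \<open>finite M\<close> True ab M0(1)]) simp
    moreover have "{a, b} \<notin> ?M0"
      using a_notin by blast
    then have "u = replace_var a c (matching_monomial (insert {a, b} ?M0))"
      using replace_var_matching_monomial_exchange[of ?M0 a b c] \<open>finite M\<close> M(2)
        twin_leaf_vertices_distinct insert_Diff[OF True] by simp
    moreover have "a \<in># matching_monomial (insert {a, b} ?M0)"
      using \<open>finite M\<close> \<open>{a, b} \<notin> ?M0\<close> twin_leaf_vertices_distinct
      by (simp add: matching_monomial_insert_edge)
    ultimately show ?thesis
      unfolding with_replaced_def matching_gens_def by blast
  qed
qed

lemma with_replaced_subset_matching_gens_add_twin_leaf:
  "with_replaced a c (matching_gens E k) \<subseteq> matching_gens (insert {c, b} E) k"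
proof
  fix u assume "u \<in> with_replaced a c (matching_gens E k)"
  then consider "u \<in> matching_gens E k"
    | M where "matching E M k" "a \<in># matching_monomial M" "u = replace_var a c (matching_monomial M)"
    unfolding with_replaced_def matching_gens_def by blast
  then show "u \<in> matching_gens (insert {c, b} E) k"
  proof cases
    case 1
    then show ?thesis
      unfolding matching_gens_def matching_def by blast
  next
    case 2
    have "finite M"
      using finite_matching[OF _ 2(1)] finite_simple_graph_finite_edges[OF graph] by simp
    have ME: "M \<subseteq> E" and disj: "\<forall>e\<in>M. \<forall>f\<in>M. e \<noteq> f \<longrightarrow> e \<inter> f = {}"
      using 2(1) unfolding matching_def by blast+
    have "\<forall>e\<in>M. finite e"
      using ME finite_simple_graph_edge[OF graph] by blast
    then obtain e where "e \<in> M" "a \<in> e"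
      using 2(2) mem_matching_monomial[OF \<open>finite M\<close>] by blast
    then have "e = {a, b}"
      using ME by (intro leaf_edge_unique[OF leaf ab]) auto
    with \<open>e \<in> M\<close> have abM: "{a, b} \<in> M"
      by simp
    let ?M0 = "M - {{a, b}}"
    have "\<forall>g\<in>?M0. g \<inter> {a, b} = {}"
      using disj abM by auto
    moreover have "\<forall>g\<in>?M0. c \<notin> g"
      using ME fresh_notin_edge by auto
    ultimately have disj_cb: "\<forall>g\<in>?M0. g \<inter> {c, b} = {}"
      by auto
    then have "matching (insert {c, b} E) (insert {c, b} ?M0) k"
      using ME by (intro matching_exchange_edge[OF 2(1) \<open>finite M\<close> abM]) auto
    moreover have "{a, b} \<notin> ?M0" "{c, b} \<notin> ?M0"
      using disj_cb by auto
    then have "u = matching_monomial (insert {c, b} ?M0)"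
      using replace_var_matching_monomial_exchange[of ?M0 a b c] \<open>finite M\<close> 2(3)
        twin_leaf_vertices_distinct insert_Diff[OF abM] by simp
    ultimately show ?thesis
      unfolding matching_gens_def by blast
  qed
qed

lemma matching_gens_add_twin_leaf:
  "matching_gens (insert {c, b} E) k = with_replaced a c (matching_gens E k)"
  using matching_gens_add_twin_leaf_subset with_replaced_subset_matching_gens_add_twin_leaf
  by (rule subset_antisym)

lemma finite_simple_graph_add_twin_leaf: "finite_simple_graph (insert c V) (insert {c, b} E)"
  using graph twin_leaf_vertices_distinct finite_simple_graph_edge[OF graph ab]
  unfolding finite_simple_graph_def by auto

lemma is_leaf_add_twin_leaf: "is_leaf (insert c V) (insert {c, b} E) a"
proof -
  have "{e \<in> insert {c, b} E. a \<in> e} = {e \<in> E. a \<in> e}"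
    using twin_leaf_vertices_distinct by auto
  then show ?thesis
    using leaf unfolding is_leaf_def by simp
qed

lemma has_linear_quotients_add_twin_leaf:
  assumes "has_linear_quotients (matching_gens E k)"
  shows "has_linear_quotients (matching_gens (insert {c, b} E) k)"
  unfolding matching_gens_add_twin_leaf
proof (rule has_linear_quotients_with_replaced[OF assms not_sym[OF twin_leaf_vertices_distinct(2)]])
  show "\<forall>u\<in>matching_gens E k. c \<notin># u"
    using matching_gens_in_graph(3)[OF graph _ fresh] by blast
  show "\<forall>u\<in>matching_gens E k. count u a \<le> 1"
    using matching_gens_in_graph(2)[OF graph] by blast
  show "\<forall>u\<in>matching_gens E k. size u = 2 * k"
    using matching_gens_in_graph(1)[OF graph] by blast
qed

end

lemma add_twin_leaves_preserves_linear_quotients: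
  assumes "finite N" and "finite_simple_graph V E" and "is_leaf V E a" and "{a, b} \<in> E"
    and "N \<inter> V = {}" and "has_linear_quotients (matching_gens E k)"
  shows "finite_simple_graph (V \<union> N) (E \<union> {{x, b} | x. x \<in> N}) \<and>
    is_leaf (V \<union> N) (E \<union> {{x, b} | x. x \<in> N}) a \<and>
    has_linear_quotients (matching_gens (E \<union> {{x, b} | x. x \<in> N}) k)"
  using assms
proof (induction N rule: finite_induct)
  case empty
  then show ?case by simp
next
  case (insert c N)
  let ?E = "E \<union> {{x, b} | x. x \<in> N}"
  have IH: "finite_simple_graph (V \<union> N) ?E" "is_leaf (V \<union> N) ?E a"
    "has_linear_quotients (matching_gens ?E k)"
    using insert by auto
  have "{a, b} \<in> ?E" "c \<notin> V \<union> N"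
    using insert by auto
  note twin = IH(1,2) this
  have "insert c (V \<union> N) = V \<union> insert c N"
    and "insert {c, b} ?E = E \<union> {{x, b} | x. x \<in> insert c N}"
    by blast+
  then show ?case
    using finite_simple_graph_add_twin_leaf[OF twin] is_leaf_add_twin_leaf[OF twin]
      has_linear_quotients_add_twin_leaf[OF twin IH(3)] by simp
qed

lemma proliferate_step_preserves_linear_quotients:
  assumes "proliferate_step H G" and "finite_simple_graph (fst H) (snd H)"
    and "has_linear_quotients (matching_gens (snd H) k)"
  shows "finite_simple_graph (fst G) (snd G) \<and> has_linear_quotients (matching_gens (snd G) k)"
proof -
  obtain a b N where twin: "finite N" "is_leaf (fst H) (snd H) a" "{a, b} \<in> snd H"
      "N \<inter> fst H = {}"
    and G: "G = (fst H \<union> N, snd H \<union> {{x, b} | x. x \<in> N})"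
    using assms(1) unfolding proliferate_step_def by blast
  show ?thesis
    using add_twin_leaves_preserves_linear_quotients[OF twin(1) assms(2) twin(2-4) assms(3)]
    by (simp add: G)
qed

theorem corollary5p2:
  fixes V W :: "'a set" and E F :: "'a set set" and k :: nat
  assumes "finite_simple_graph V E"
    and "obtained_by_proliferating (V, E) (W, F)"
    and "has_linear_quotients (matching_gens E k)"
  shows "has_linear_quotients (matching_gens F k)"
proof -
  have "finite_simple_graph (fst G) (snd G) \<and> has_linear_quotients (matching_gens (snd G) k)"
    if "proliferate_step\<^sup>*\<^sup>* (V, E) G" for G
    using that
  proof (induction rule: rtranclp_induct)
    case base
    then show ?case
      using assms(1,3) by simp
  next
    case (step G G')
    then show ?case
      using proliferate_step_preserves_linear_quotients[OF step.hyps(2)] by blast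
  qed
  from this[of "(W, F)"] show ?thesis
    using assms(2) unfolding obtained_by_proliferating_def by simp
qed

end
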